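(* Let $\|\cdot\|$ be a norm on $\mathbb{R}^d$, let $\Phi$ be a mirror map whose Bregman divergence satisfies $\frac{m}{2}\|x-y\|^2\le D_\Phi(x,y)\le\frac{M}{2}\|x-y\|^2$ for constants $0<m\le M$, let $f_t$ be a convex function and $x_{t-1}$ a point. For each $l$ with $K_l=\{x: f_t(x)\le l\}$ nonempty, let $x(l)=\Pi^\Phi_{K_l}(x_{t-1})$. Then the function $g(l)=\|x(l)-x_{t-1}\|$ is continuous in $l$.
   Context: For a convex function $\Phi$, the Bregman divergence is $D_\Phi(x,y)=\Phi(x)-\Phi(y)-\nabla\Phi(y)^T(x-y)$, and the Bregman projection of $x$ onto a convex set $K$ is $\Pi^\Phi_K(x)=\arg\min_{y\in K}D_\Phi(y,x)$. *)

theory Defs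
  imports "HOL-Analysis.Analysis"
begin

definition bregman :: "('a::euclidean_space \<Rightarrow> real) \<Rightarrow> 'a \<Rightarrow> 'a \<Rightarrow> real" where
  "bregman Phi x y = Phi x - Phi y - frechet_derivative Phi (at y) (x - y)"

definition bregman_proj :: "('a::euclidean_space \<Rightarrow> real) \<Rightarrow> 'a set \<Rightarrow> 'a \<Rightarrow> 'a" where
  "bregman_proj Phi K x = arg_min_on (\<lambda>y. bregman Phi y x) K"

definition is_norm :: "('a::real_vector \<Rightarrow> real) \<Rightarrow> bool" where
  "is_norm N \<longleftrightarrow> (\<forall>x. N x = 0 \<longleftrightarrow> x = 0) \<and> (\<forall>c x. N (c *\<^sub>R x) = \<bar>c\<bar> * N x)
     \<and> (\<forall>x y. N (x + y) \<le> N x + N y)"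

end

theory Submission
  imports Defs
begin

text \<open>Write D y for the Bregman divergence of y from x0. The lower Bregman bound makes D
  uniformly convex with respect to N (a midpoint inequality with modulus m/8) and coercive,
  so on every nonempty sublevel set K_l of the convex function f it has a minimiser x(l), and
  D x(l) + m/4 N(y - x(l))^2 \<le> D y for all y in K_l. Taking y = x(l) in K_l' for l \<le> l'
  bounds m/4 N(x(l) - x(l'))^2 by the decrease of the optimal value V(l) = D x(l), so it
  suffices that V is continuous: from the right by compactness of the sublevel sets of D, from
  the left by moving x(l) towards a Slater point of f.\<close>

lemma is_norm_scaleR:
  assumes "is_norm N"
  shows "N (c *\<^sub>R x) = \<bar>c\<bar> * N x"
  using assms unfolding is_norm_def by blast

lemma is_norm_triangle:
  assumes "is_norm N"
  shows "N (x + y) \<le> N x + N y"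
  using assms unfolding is_norm_def by blast

lemma is_norm_minus_commute:
  assumes "is_norm N"
  shows "N (x - y) = N (y - x)"
  using is_norm_scaleR[OF assms, of "-1" "x - y"] by simp

lemma is_norm_nonneg:
  assumes "is_norm N"
  shows "0 \<le> N x"
  using is_norm_triangle[OF assms, of x "-x"] is_norm_minus_commute[OF assms, of 0 x]
    is_norm_scaleR[OF assms, of 0 x] by simp

lemma is_norm_pos:
  assumes "is_norm N" "x \<noteq> 0"
  shows "0 < N x"
  using assms is_norm_nonneg[OF assms(1), of x] unfolding is_norm_def
  by (metis order_le_less)

lemma is_norm_convex_on:
  assumes "is_norm N"
  shows "convex_on UNIV N"
proof (rule convex_onI)
  fix t :: real and x y assume "0 < t" "t < 1"
  then have "N ((1 - t) *\<^sub>R x) = (1 - t) * N x" "N (t *\<^sub>R y) = t * N y"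
    by (simp_all add: is_norm_scaleR[OF assms])
  then show "N ((1 - t) *\<^sub>R x + t *\<^sub>R y) \<le> (1 - t) * N x + t * N y"
    using is_norm_triangle[OF assms] by metis
qed simp

lemma is_norm_continuous_on:
  fixes N :: "'a::euclidean_space \<Rightarrow> real"
  assumes "is_norm N"
  shows "continuous_on S N"
  using convex_on_continuous[OF open_UNIV is_norm_convex_on[OF assms]] continuous_on_subset
  by blast

text \<open>The constant is the minimum of N on the compact unit sphere.\<close>
lemma is_norm_ge_norm:
  fixes N :: "'a::euclidean_space \<Rightarrow> real"
  assumes "is_norm N"
  obtains c where "0 < c" "\<And>x. c * norm x \<le> N x"
proof -
  have "sphere (0::'a) 1 \<noteq> {}" by simp
  then obtain u where u: "u \<in> sphere (0::'a) 1" "\<And>y. y \<in> sphere 0 1 \<Longrightarrow> N u \<le> N y"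
    using continuous_attains_inf[OF compact_sphere _ is_norm_continuous_on[OF assms]] by blast
  have "N u * norm x \<le> N x" for x
  proof (cases "x = 0")
    case False
    have "N u \<le> N ((1 / norm x) *\<^sub>R x)" using u(2) False by simp
    also have "\<dots> = N x / norm x" using is_norm_scaleR[OF assms] by simp
    finally show ?thesis using False by (simp add: field_simps)
  qed (simp add: is_norm_nonneg[OF assms])
  moreover have "0 < N u" using u(1) by (intro is_norm_pos[OF assms]) auto
  ultimately show thesis using that by blast
qed

lemma is_norm_bounded_ball:
  fixes N :: "'a::euclidean_space \<Rightarrow> real"
  assumes "is_norm N"
  shows "bounded {y. N (y - x0) \<le> r}"
proof -
  obtain c where c: "0 < c" "\<And>x. c * norm x \<le> N x" using is_norm_ge_norm[OF assms] by blast
  have "{y. N (y - x0) \<le> r} \<subseteq> cball x0 (r / c)"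
  proof
    fix y assume "y \<in> {y. N (y - x0) \<le> r}"
    then have "c * norm (y - x0) \<le> r" using c(2)[of "y - x0"] by simp
    then show "y \<in> cball x0 (r / c)" using c(1) by (simp add: dist_norm norm_minus_commute field_simps)
  qed
  then show ?thesis using bounded_cball bounded_subset by blast
qed

lemma bregman_midpoint:
  fixes Phi :: "'a::euclidean_space \<Rightarrow> real"
  assumes "Phi differentiable (at x)" and "Phi differentiable (at (midpoint y1 y2))"
  shows "bregman Phi (midpoint y1 y2) x = (bregman Phi y1 x + bregman Phi y2 x) / 2
           - (bregman Phi y1 (midpoint y1 y2) + bregman Phi y2 (midpoint y1 y2)) / 2"
proof -
  define z where "z = midpoint y1 y2"
  define Lx where "Lx = frechet_derivative Phi (at x)"
  define Lz where "Lz = frechet_derivative Phi (at z)"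
  have "linear Lx" "linear Lz"
    using assms unfolding Lx_def Lz_def z_def frechet_derivative_works by (auto intro: has_derivative_linear)
  moreover have zz: "y1 + y2 = z + z" by (simp add: z_def)
  then have "y2 - z = - (y1 - z)" by (simp add: algebra_simps)
  moreover have "z - x = (1/2) *\<^sub>R ((y1 - x) + (y2 - x))"
    using zz scaleR_half_double[of "z - x"] by (simp add: algebra_simps)
  ultimately have "Lz (y2 - z) = - Lz (y1 - z)" "Lx (z - x) = (Lx (y1 - x) + Lx (y2 - x)) / 2"
    by (simp_all only: linear_neg linear_scale linear_add) simp
  then show ?thesis
    unfolding z_def[symmetric] bregman_def Lx_def[symmetric] Lz_def[symmetric] by (simp add: field_simps)
qed

lemma bregman_uniformly_convex:
  fixes Phi :: "'a::euclidean_space \<Rightarrow> real"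
  assumes "is_norm N" and "\<And>y. Phi differentiable (at y)"
    and "\<And>x y. m / 2 * (N (x - y))\<^sup>2 \<le> bregman Phi x y"
  shows "bregman Phi (midpoint y1 y2) x + m / 8 * (N (y1 - y2))\<^sup>2
           \<le> (bregman Phi y1 x + bregman Phi y2 x) / 2"
proof -
  define z where "z = midpoint y1 y2"
  have zz: "y1 + y2 = z + z" by (simp add: z_def)
  then have "y1 - y2 = (y1 - z) + (y1 - z)" by (simp add: algebra_simps)
  then have "y1 - z = (1/2) *\<^sub>R (y1 - y2)" using scaleR_half_double[of "y1 - z"] by metis
  then have Nz: "N (y1 - z) = N (y1 - y2) / 2"
    by (simp add: is_norm_scaleR[OF assms(1)])
  have half: "m / 2 * (N (y1 - z))\<^sup>2 = m / 8 * (N (y1 - y2))\<^sup>2"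
    unfolding Nz by (simp add: power_divide)
  have "y2 - z = - (y1 - z)" using zz by (simp add: algebra_simps)
  then have N2: "N (y2 - z) = N (y1 - z)"
    using is_norm_minus_commute[OF assms(1), of z y1] by simp
  show ?thesis
    using bregman_midpoint[OF assms(2) assms(2), of y1 y2 x] assms(3)[of y1 z]
      assms(3)[of y2 z, unfolded N2] half
    unfolding z_def[symmetric] by argo
qed

lemma continuous_on_bregman:
  fixes Phi :: "'a::euclidean_space \<Rightarrow> real"
  assumes "\<And>y. Phi differentiable (at y)"
  shows "continuous_on S (\<lambda>y. bregman Phi y x)"
proof -
  have "bounded_linear (frechet_derivative Phi (at x))"
    using assms[of x] unfolding frechet_derivative_works by (rule has_derivative_bounded_linear)
  then have L: "continuous_on S (\<lambda>y. frechet_derivative Phi (at x) (y - x))"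
    by (rule bounded_linear.continuous_on[OF _ continuous_on_diff[OF continuous_on_id continuous_on_const]])
  have "continuous_on S Phi"
    using assms by (simp add: differentiable_at_imp_differentiable_on differentiable_imp_continuous_on)
  then show ?thesis
    unfolding bregman_def by (rule continuous_on_diff[OF continuous_on_diff[OF _ continuous_on_const] L])
qed

lemma compact_sublevel_bregman:
  fixes Phi :: "'a::euclidean_space \<Rightarrow> real"
  assumes "is_norm N" and "\<And>y. Phi differentiable (at y)" and "0 < m"
    and "\<And>x y. m / 2 * (N (x - y))\<^sup>2 \<le> bregman Phi x y"
  shows "compact {y. bregman Phi y x0 \<le> C}"
proof -
  have "{y. bregman Phi y x0 \<le> C} \<subseteq> {y. N (y - x0) \<le> sqrt (2 / m * C)}"
  proof
    fix y assume "y \<in> {y. bregman Phi y x0 \<le> C}"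
    then have "(N (y - x0))\<^sup>2 \<le> 2 / m * C"
      using assms(4)[of y x0] assms(3) by (simp add: field_simps)
    then show "y \<in> {y. N (y - x0) \<le> sqrt (2 / m * C)}" by (simp add: real_le_rsqrt)
  qed
  then have "bounded {y. bregman Phi y x0 \<le> C}"
    by (rule bounded_subset[OF is_norm_bounded_ball[OF assms(1)]])
  moreover have "closed {y. bregman Phi y x0 \<le> C}"
    by (rule closed_Collect_le[OF continuous_on_bregman[OF assms(2)] continuous_on_const])
  ultimately show ?thesis by (simp add: compact_eq_bounded_closed)
qed

lemma arg_min_on_compact_sublevels:
  fixes D :: "'a::t2_space \<Rightarrow> real"
  assumes "continuous_on UNIV D" and "\<And>C. compact {y. D y \<le> C}"
    and "closed K" and "w \<in> K"
  shows "arg_min_on D K \<in> K" and "\<And>y. y \<in> K \<Longrightarrow> D (arg_min_on D K) \<le> D y"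
proof -
  define T where "T = K \<inter> {y. D y \<le> D w}"
  have "compact T" unfolding T_def by (rule closed_Int_compact[OF assms(3,2)])
  moreover have "T \<noteq> {}" using assms(4) unfolding T_def by blast
  ultimately obtain z where z: "z \<in> T" "\<And>y. y \<in> T \<Longrightarrow> D z \<le> D y"
    using continuous_attains_inf[OF _ _ continuous_on_subset[OF assms(1) subset_UNIV]] by metis
  have "D z \<le> D y" if "y \<in> K" for y
    using z that unfolding T_def by (cases "D y \<le> D w") auto
  then have "is_arg_min D (\<lambda>x. x \<in> K) z"
    using z(1) unfolding T_def is_arg_min_linorder by simp
  then have "is_arg_min D (\<lambda>x. x \<in> K) (arg_min_on D K)"
    unfolding arg_min_on_def arg_min_def by (rule someI)
  then show "arg_min_on D K \<in> K" "\<And>y. y \<in> K \<Longrightarrow> D (arg_min_on D K) \<le> D y"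
    unfolding is_arg_min_linorder by simp_all
qed

text \<open>D plays the role of the divergence from x0, proj l of x(l) and opt l of V(l).\<close>
locale level_projection =
  fixes N :: "'a::euclidean_space \<Rightarrow> real" and m :: real and D f :: "'a \<Rightarrow> real"
  assumes is_norm: "is_norm N" and m_pos: "0 < m"
    and continuous_D: "continuous_on UNIV D"
    and compact_sublevel: "compact {y. D y \<le> C}"
    and uniformly_convex: "D (midpoint y1 y2) + m / 8 * (N (y1 - y2))\<^sup>2 \<le> (D y1 + D y2) / 2"
    and convex_f: "convex_on UNIV f"
begin

definition level :: "real \<Rightarrow> 'a set" where "level l = {x. f x \<le> l}"

definition feasible :: "real set" where "feasible = {l. level l \<noteq> {}}"

definition proj :: "real \<Rightarrow> 'a" where "proj l = arg_min_on D (level l)"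

definition opt :: "real \<Rightarrow> real" where "opt l = D (proj l)"

lemma continuous_f: "continuous_on UNIV f"
  using convex_on_continuous[OF open_UNIV convex_f] .

lemma closed_level: "closed (level l)"
  unfolding level_def by (rule closed_Collect_le[OF continuous_f continuous_on_const])

lemma convex_comb_in_level:
  assumes "y1 \<in> level l1" "y2 \<in> level l2" "0 \<le> t" "t \<le> 1"
  shows "(1 - t) *\<^sub>R y1 + t *\<^sub>R y2 \<in> level ((1 - t) * l1 + t * l2)"
proof -
  have "f ((1 - t) *\<^sub>R y1 + t *\<^sub>R y2) \<le> (1 - t) * f y1 + t * f y2"
    using assms(3,4) by (intro convex_onD[OF convex_f]) auto
  also have "\<dots> \<le> (1 - t) * l1 + t * l2"
    using assms unfolding level_def by (intro add_mono mult_left_mono) auto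
  finally show ?thesis unfolding level_def by simp
qed

lemma midpoint_in_level: "y1 \<in> level l \<Longrightarrow> y2 \<in> level l \<Longrightarrow> midpoint y1 y2 \<in> level l"
  using convex_comb_in_level[of y1 l y2 l "1/2"] by (simp add: midpoint_def scaleR_add_right)

lemma level_mono: "l \<le> l' \<Longrightarrow> level l \<subseteq> level l'"
  unfolding level_def by auto

lemma feasible_mono: "l \<in> feasible \<Longrightarrow> l \<le> l' \<Longrightarrow> l' \<in> feasible"
  unfolding feasible_def using level_mono by blast

lemma proj_in_level: "l \<in> feasible \<Longrightarrow> proj l \<in> level l"
  unfolding feasible_def proj_def
  using arg_min_on_compact_sublevels(1)[OF continuous_D compact_sublevel closed_level] by blast

lemma opt_le: "l \<in> feasible \<Longrightarrow> y \<in> level l \<Longrightarrow> opt l \<le> D y"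
  unfolding feasible_def opt_def proj_def
  using arg_min_on_compact_sublevels(2)[OF continuous_D compact_sublevel closed_level] by blast

lemma opt_growth:
  assumes "l \<in> feasible" "y \<in> level l"
  shows "opt l + m / 4 * (N (y - proj l))\<^sup>2 \<le> D y"
proof -
  have "opt l \<le> D (midpoint (proj l) y)"
    using assms by (intro opt_le midpoint_in_level proj_in_level)
  then show ?thesis
    using uniformly_convex[of "proj l" y] is_norm_minus_commute[OF is_norm, of y "proj l"]
    unfolding opt_def by simp
qed

lemma opt_decrease:
  assumes "l \<in> feasible" "l \<le> l'"
  shows "opt l' + m / 4 * (N (proj l - proj l'))\<^sup>2 \<le> opt l"
  using opt_growth[OF feasible_mono[OF assms] subsetD[OF level_mono[OF assms(2)] proj_in_level[OF assms(1)]]]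
  unfolding opt_def by simp

lemma opt_antimono:
  assumes "l \<in> feasible" "l \<le> l'"
  shows "opt l' \<le> opt l"
proof -
  have "0 \<le> m / 4 * (N (proj l - proj l'))\<^sup>2" using m_pos by simp
  then show ?thesis using opt_decrease[OF assms] by linarith
qed

lemma proj_dist_le_opt:
  assumes "l \<in> feasible" "l' \<in> feasible"
  shows "m / 4 * (N (proj l' - proj l))\<^sup>2 \<le> \<bar>opt l' - opt l\<bar>"
proof (cases "l \<le> l'")
  case True
  then show ?thesis
    using opt_decrease[OF assms(1) True] is_norm_minus_commute[OF is_norm, of "proj l"]
    by (simp add: abs_if)
next
  case False
  then show ?thesis using opt_decrease[OF assms(2), of l] by (simp add: abs_if)
qed

text \<open>Right continuity: f attains a minimum on the compact set where D is at most
  opt l - e, and this minimum lies strictly above l.\<close>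
lemma opt_lower_right:
  assumes "l \<in> feasible" "0 < e"
  shows "\<exists>d>0. \<forall>l'. l \<le> l' \<and> l' < l + d \<longrightarrow> opt l - e < opt l'"
proof -
  define S where "S = {y. D y \<le> opt l - e}"
  show ?thesis
  proof (cases "S = {}")
    case True
    then have "opt l - e < D y" for y unfolding S_def by (auto simp: not_le)
    then have "opt l - e < opt l'" for l' unfolding opt_def[of l'] by blast
    then show ?thesis using zero_less_one by blast
  next
    case False
    obtain z where z: "z \<in> S" "\<And>y. y \<in> S \<Longrightarrow> f z \<le> f y"
      using continuous_attains_inf[OF _ False continuous_on_subset[OF continuous_f subset_UNIV]]
        compact_sublevel unfolding S_def by blast
    have "\<not> f z \<le> l"
    proof
      assume "f z \<le> l"
      then have "opt l \<le> D z" by (intro opt_le[OF assms(1)]) (simp add: level_def)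
      then show False using z(1) assms(2) unfolding S_def by simp
    qed
    then have "0 < f z - l" by simp
    moreover have "opt l - e < opt l'" if "l \<le> l'" "l' < l + (f z - l)" for l'
    proof (rule ccontr)
      assume "\<not> opt l - e < opt l'"
      then have "proj l' \<in> S" unfolding S_def opt_def[of l'] by simp
      then have "f z \<le> f (proj l')" by (rule z(2))
      moreover have "f (proj l') \<le> l'"
        using proj_in_level[OF feasible_mono[OF assms(1) that(1)]] unfolding level_def by simp
      ultimately show False using that(2) by simp
    qed
    ultimately show ?thesis by blast
  qed
qed

text \<open>Left continuity: moving proj l a little towards a Slater point w with f w < l
  gives a point of a slightly lower level set where D has barely increased. Without a
  Slater point, l is the left end of the feasible levels.\<close>
lemma opt_upper_left:
  assumes "l \<in> feasible" "0 < e"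
  shows "\<exists>d>0. \<forall>l'\<in>feasible. l - d < l' \<and> l' \<le> l \<longrightarrow> opt l' < opt l + e"
proof (cases "\<exists>w. f w < l")
  case False
  then have lower: "l \<le> f x" for x by (simp add: not_less)
  have left_end: "l' = l" if l': "l' \<in> feasible" "l' \<le> l" for l'
  proof -
    from l'(1) obtain x where "f x \<le> l'" unfolding feasible_def level_def by auto
    with lower[of x] l'(2) show ?thesis by linarith
  qed
  show ?thesis
  proof (intro exI[of _ 1] conjI ballI impI)
    fix l' assume l': "l' \<in> feasible" "l - 1 < l' \<and> l' \<le> l"
    then have "l' = l" using left_end[OF l'(1)] by blast
    then show "opt l' < opt l + e" using assms(2) by simp
  qed simp
next
  case True
  then obtain w where w: "f w < l" by blast
  define g where "g t = D ((1 - t) *\<^sub>R proj l + t *\<^sub>R w)" for t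
  have "continuous_on UNIV (\<lambda>t. (1 - t) *\<^sub>R proj l + t *\<^sub>R w)"
    by (intro continuous_intros)
  then have "continuous_on UNIV g"
    unfolding g_def using continuous_on_compose2[OF continuous_D _ subset_UNIV] by blast
  then obtain r where r: "0 < r" "\<And>t. dist t 0 < r \<Longrightarrow> dist (g t) (g 0) < e"
    using continuous_on_iff[THEN iffD1, rule_format, OF _ UNIV_I assms(2)] by blast
  define d where "d = min r 1 * (l - f w)"
  have "opt l' < opt l + e" if l': "l' \<in> feasible" "l - d < l'" "l' \<le> l" for l'
  proof -
    define t where "t = (l - l') / (l - f w)"
    have q: "0 < l - f w" using w by simp
    have t_nonneg: "0 \<le> t" unfolding t_def using l'(3) q by simp
    have "l - l' < min r 1 * (l - f w)" using l'(2) unfolding d_def by linarith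
    then have t_small: "t < min r 1" unfolding t_def by (simp only: pos_divide_less_eq[OF q])
    have "t * (l - f w) = l - l'" unfolding t_def using q by simp
    then have t_level: "(1 - t) * l + t * f w = l'" by (simp add: algebra_simps)
    have "w \<in> level (f w)" by (simp add: level_def)
    from convex_comb_in_level[OF proj_in_level[OF assms(1)] this t_nonneg] t_small
    have "(1 - t) *\<^sub>R proj l + t *\<^sub>R w \<in> level l'" by (simp only: t_level)
    then have "opt l' \<le> g t" unfolding g_def by (rule opt_le[OF l'(1)])
    moreover have "g t < g 0 + e" using r(2)[of t] t_nonneg t_small by (simp add: dist_real_def)
    ultimately show ?thesis unfolding g_def opt_def by simp
  qed
  moreover have "0 < d" unfolding d_def using r(1) w by simp
  ultimately show ?thesis by blast
qed

lemma continuous_on_opt: "continuous_on feasible opt"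
  unfolding continuous_on_iff
proof (intro ballI allI impI)
  fix l e assume l: "l \<in> feasible" and e: "(0::real) < e"
  obtain d1 where d1: "0 < d1" "\<And>l'. l \<le> l' \<Longrightarrow> l' < l + d1 \<Longrightarrow> opt l - e < opt l'"
    using opt_lower_right[OF l e] by blast
  obtain d2 where d2: "0 < d2" "\<And>l'. l' \<in> feasible \<Longrightarrow> l - d2 < l' \<Longrightarrow> l' \<le> l \<Longrightarrow> opt l' < opt l + e"
    using opt_upper_left[OF l e] by blast
  have "\<bar>opt l' - opt l\<bar> < e" if "l' \<in> feasible" "\<bar>l' - l\<bar> < min d1 d2" for l'
  proof (cases "l \<le> l'")
    case True
    then show ?thesis
      using opt_antimono[OF l True] d1(2)[OF True] that(2) unfolding abs_less_iff by linarith
  next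
    case False
    then show ?thesis
      using opt_antimono[OF that(1), of l] d2(2)[OF that(1)] that(2) unfolding abs_less_iff by linarith
  qed
  then show "\<exists>d>0. \<forall>l'\<in>feasible. dist l' l < d \<longrightarrow> dist (opt l') (opt l) < e"
    using d1(1) d2(1) by (intro exI[of _ "min d1 d2"]) (auto simp: dist_real_def)
qed

lemma continuous_on_proj: "continuous_on feasible proj"
  unfolding continuous_on_def
proof
  fix l assume l: "l \<in> feasible"
  obtain c where c: "0 < c" "\<And>x. c * norm x \<le> N x" using is_norm_ge_norm[OF is_norm] by blast
  define g where "g l' = sqrt (4 / m * \<bar>opt l' - opt l\<bar>) / c" for l'
  have "norm (proj l' - proj l) \<le> g l'" if "l' \<in> feasible" for l'
  proof -
    have "(N (proj l' - proj l))\<^sup>2 \<le> 4 / m * \<bar>opt l' - opt l\<bar>"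
      using proj_dist_le_opt[OF l that] m_pos by (simp add: field_simps)
    then have "N (proj l' - proj l) \<le> sqrt (4 / m * \<bar>opt l' - opt l\<bar>)"
      by (rule real_le_rsqrt)
    then have "c * norm (proj l' - proj l) \<le> sqrt (4 / m * \<bar>opt l' - opt l\<bar>)"
      by (rule order_trans[OF c(2)])
    then show ?thesis unfolding g_def using c(1) by (simp add: field_simps)
  qed
  then have "eventually (\<lambda>l'. norm (proj l' - proj l) \<le> g l') (at l within feasible)"
    unfolding eventually_at_filter by (intro always_eventually) blast
  moreover have "(opt \<longlongrightarrow> opt l) (at l within feasible)"
    using continuous_on_opt l unfolding continuous_on_def by blast
  then have "(g \<longlongrightarrow> sqrt (4 / m * \<bar>opt l - opt l\<bar>) / c) (at l within feasible)"
    unfolding g_def by (intro tendsto_intros) (use c(1) in auto)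
  then have "(g \<longlongrightarrow> 0) (at l within feasible)" by simp
  ultimately have "((\<lambda>l'. proj l' - proj l) \<longlongrightarrow> 0) (at l within feasible)"
    by (rule Lim_null_comparison)
  then show "(proj \<longlongrightarrow> proj l) (at l within feasible)" by (rule LIM_zero_cancel)
qed

lemma continuous_on_norm_proj_diff: "continuous_on feasible (\<lambda>l. N (proj l - x0))"
proof -
  have "continuous_on feasible (\<lambda>l. proj l - x0)"
    by (rule continuous_on_diff[OF continuous_on_proj continuous_on_const])
  then show ?thesis
    by (rule continuous_on_compose2[OF is_norm_continuous_on[OF is_norm] _ subset_UNIV])
qed

end

theorem lemma4:
  fixes N :: "'a::euclidean_space \<Rightarrow> real"
    and Phi :: "'a \<Rightarrow> real"
    and f :: "'a \<Rightarrow> real"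
    and x0 :: 'a
    and m M :: real
  assumes "is_norm N"
    and "convex_on UNIV Phi"
    and "\<And>y. Phi differentiable (at y)"
    and "0 < m" and "m \<le> M"
    and "\<And>x y. m / 2 * (N (x - y))\<^sup>2 \<le> bregman Phi x y"
    and "\<And>x y. bregman Phi x y \<le> M / 2 * (N (x - y))\<^sup>2"
    and "convex_on UNIV f"
  shows "continuous_on {l. {x. f x \<le> l} \<noteq> {}}
           (\<lambda>l. N (bregman_proj Phi {x. f x \<le> l} x0 - x0))"
proof -
  interpret level_projection N m "\<lambda>y. bregman Phi y x0" f
  proof
    show "continuous_on UNIV (\<lambda>y. bregman Phi y x0)" by (rule continuous_on_bregman[OF assms(3)])
    show "compact {y. bregman Phi y x0 \<le> C}" for C
      by (rule compact_sublevel_bregman[OF assms(1,3,4,6)])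
    show "bregman Phi (midpoint y1 y2) x0 + m / 8 * (N (y1 - y2))\<^sup>2
      \<le> (bregman Phi y1 x0 + bregman Phi y2 x0) / 2" for y1 y2
      by (rule bregman_uniformly_convex[OF assms(1,3,6)])
  qed (use assms in auto)
  show ?thesis
    using continuous_on_norm_proj_diff[of x0]
    unfolding feasible_def level_def proj_def bregman_proj_def .
qed

end
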